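(* Let $\alpha\in(0,1)\setminus\mathcal{A}$. For the BOACI procedure, almost surely the following holds: if $\frac1T\sum_{t=1}^T d(\boldsymbol q_t,\boldsymbol q_{\mathrm{unif}})\to0$ (the opponent is statistically $\{\boldsymbol q_{\mathrm{unif}}\}$-restricted), then $$\lim_{T\to\infty}\frac1T\sum_{t=1}^T m(a_t,b_t)=\big(r(\alpha),\ \mathrm{Leb}(C_\alpha)\big)=m^\star(\boldsymbol q_{\mathrm{unif}}).$$
   Context: Fix $n\ge1$, $L>0$ and calibration scores $s_{(1)}<\dots<s_{(n)}$ in $[0,L)$, with $s_{(0)}=0$, $s_{(n+1)}=L$. Let $\mathcal{A}=\{k/(n+1):k=0,\dots,n+1\}$, $\mathcal{B}=\{k/(n+1):k=1,\dots,n+1\}$, $\boldsymbol q_{\mathrm{unif}}$ the uniform distribution on $\mathcal{B}$. For $\alpha\in[0,1]$, $r(\alpha)=1-\lceil (n+1)(1-\alpha)\rceil/(n+1)$ (largest element of $\mathcal{A}$ not exceeding $\alpha$) and $\mathrm{Leb}(C_\alpha)=2s_{(\lceil (n+1)(1-\alpha)\rceil)}$. Payoff $m(a,b)=(\mathbf{1}_{b\le a},\mathrm{Leb}(C_a))$. $\mathrm{Quant}(\alpha,\boldsymbol q)=\max\{a\in\mathcal{A}:\sum_b q_b\mathbf{1}_{b\le a}\le\alpha\}$ and $m^\star(\boldsymbol q)=(\sum_b q_b\mathbf{1}_{b\le\mathrm{Quant}(\alpha,\boldsymbol q)},\ \mathrm{Leb}(C_{\mathrm{Quant}(\alpha,\boldsymbol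 q)}))$. Repeated game: at each round $t$ the opponent chooses $\boldsymbol q_t\in\Delta(\mathcal{B})$ based on the past and $b_t\sim\boldsymbol q_t$ independently of the learner's round-$t$ randomness given the past; $d$ is Euclidean distance. A (possibly randomized) forecaster outputting $\boldsymbol z_t\in\Delta(\mathcal{B})$ at each round from past observations is calibrated if for every Borel $G\subseteq\Delta(\mathcal{B})$ and every opponent strategy, $\frac1T\sum_{t\le T}\mathbf{1}_{\boldsymbol z_t\in G}(\boldsymbol\delta_{b_t}-\boldsymbol z_t)\to0$ a.s. BOACI: $a_1=\mathrm{Quant}(\alpha,\boldsymbol q_{\mathrm{unif}})$, and for $t\ge2$, $a_t=\mathrm{Quant}(\alpha,\boldsymbol z_t)$ where $\boldsymbol z_t$ is the output of a calibrated forecaster fed with $b_1,\dots,b_{t-1}$. *)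

theory Defs
  imports "HOL-Probability.Probability"
begin

text \<open>Distributions on B = {k/(n+1) : k = 1..n+1} are represented as vectors
  q :: nat => real indexed by k in {1..n+1} (q k = probability of k/(n+1)),
  and equal to 0 outside {1..n+1}.\<close>

definition Aset :: "nat \<Rightarrow> real set" where
  "Aset n = {real k / real (n + 1) | k. k \<le> n + 1}"

definition bval :: "nat \<Rightarrow> nat \<Rightarrow> real" where
  "bval n k = real k / real (n + 1)"

definition Bset :: "nat \<Rightarrow> real set" where
  "Bset n = bval n ` {1..n + 1}"

definition Delta :: "nat \<Rightarrow> (nat \<Rightarrow> real) set" where
  "Delta n = {q. (\<forall>k. 0 \<le> q k) \<and> (\<forall>k. k \<notin> {1..n + 1} \<longrightarrow> q k = 0)
                \<and> (\<Sum>k=1..n + 1. q k) = 1}"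

definition qunif :: "nat \<Rightarrow> nat \<Rightarrow> real" where
  "qunif n = (\<lambda>k. if k \<in> {1..n + 1} then 1 / real (n + 1) else 0)"

definition dirac_vec :: "nat \<Rightarrow> real \<Rightarrow> nat \<Rightarrow> real" where
  "dirac_vec n b = (\<lambda>k. if k \<in> {1..n + 1} \<and> bval n k = b then 1 else 0)"

definition eucl_d :: "nat \<Rightarrow> (nat \<Rightarrow> real) \<Rightarrow> (nat \<Rightarrow> real) \<Rightarrow> real" where
  "eucl_d n p q = sqrt (\<Sum>k=1..n + 1. (p k - q k)^2)"

definition cdf :: "nat \<Rightarrow> (nat \<Rightarrow> real) \<Rightarrow> real \<Rightarrow> real" where
  "cdf n q a = (\<Sum>k=1..n + 1. q k * (if bval n k \<le> a then 1 else 0))"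

definition Quant :: "nat \<Rightarrow> real \<Rightarrow> (nat \<Rightarrow> real) \<Rightarrow> real" where
  "Quant n \<alpha> q = Max {a \<in> Aset n. cdf n q a \<le> \<alpha>}"

definition rfun :: "nat \<Rightarrow> real \<Rightarrow> real" where
  "rfun n \<alpha> = 1 - real (nat \<lceil>real (n + 1) * (1 - \<alpha>)\<rceil>) / real (n + 1)"

definition LebC :: "nat \<Rightarrow> (nat \<Rightarrow> real) \<Rightarrow> real \<Rightarrow> real" where
  "LebC n s \<alpha> = 2 * s (nat \<lceil>real (n + 1) * (1 - \<alpha>)\<rceil>)"

definition payoff :: "nat \<Rightarrow> (nat \<Rightarrow> real) \<Rightarrow> real \<Rightarrow> real \<Rightarrow> real \<times> real" where
  "payoff n s a b = ((if b \<le> a then 1 else 0), LebC n s a)"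

definition mstar :: "nat \<Rightarrow> (nat \<Rightarrow> real) \<Rightarrow> real \<Rightarrow> (nat \<Rightarrow> real) \<Rightarrow> real \<times> real" where
  "mstar n s \<alpha> q = (cdf n q (Quant n \<alpha> q), LebC n s (Quant n \<alpha> q))"

definition boaci :: "nat \<Rightarrow> real \<Rightarrow> (nat \<Rightarrow> nat \<Rightarrow> real) \<Rightarrow> nat \<Rightarrow> real" where
  "boaci n \<alpha> z t = (if t \<le> 1 then Quant n \<alpha> (qunif n) else Quant n \<alpha> (z t))"

end

theory Submission
  imports Defs "HOL-Library.Discrete_Functions"
begin

text \<open>Fix \<open>\<epsilon> > 0\<close> so small that every distribution whose coordinates are all within \<open>\<epsilon>\<close> of
  \<open>1/(n+1)\<close> has the same \<open>\<alpha>\<close>-quantile \<open>r(\<alpha>)\<close> as the uniform one; this is where \<open>\<alpha> \<notin> Aset n\<close> is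
  used. Let H be one of the half-spaces where the k-th coordinate is at least \<open>1/(n+1) + \<epsilon>\<close> or at
  most \<open>1/(n+1) - \<epsilon>\<close>. The terms 1_H(z_t) (delta(b_t) - q_t)_k are bounded martingale differences, so
  their averages vanish almost surely; calibration makes the averages of 1_H(z_t) (delta(b_t) - z_t)_k
  vanish; and the opponent's q_t are close to uniform on average. Hence the averages of
  1_H(z_t) (z_t - q_unif)_k vanish, while on H this quantity has absolute value at least \<open>\<epsilon>\<close>:
  the forecasts visit H with vanishing frequency. So BOACI plays \<open>r(\<alpha>)\<close> on all but a vanishing
  fraction of rounds, and the average payoff has the limit of the constant action \<open>r(\<alpha>)\<close>, whose
  coverage frequency tends to its uniform probability \<open>r(\<alpha>)\<close> by the same strong law.\<close>

section \<open>Cesaro averages\<close>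

definition avg :: "(nat \<Rightarrow> 'a::real_vector) \<Rightarrow> nat \<Rightarrow> 'a" where
  "avg f T = (1 / real T) *\<^sub>R (\<Sum>t=1..T. f t)"

lemma avg_real: "avg f T = (1 / real T) * (\<Sum>t=1..T. f t)" for f :: "nat \<Rightarrow> real"
  by (simp add: avg_def)

lemma avg_add: "avg (\<lambda>t. f t + g t) T = avg f T + avg g T"
  by (simp add: avg_def sum.distrib scaleR_add_right)

lemma avg_diff: "avg (\<lambda>t. f t - g t) T = avg f T - avg g T"
  by (simp add: avg_def sum_subtractf scaleR_diff_right)

lemma avg_mult_left: "avg (\<lambda>t. c * f t) T = c * avg f T" for f :: "nat \<Rightarrow> real"
  by (simp add: avg_def sum_distrib_left)

lemma avg_mono: "(\<And>t. 1 \<le> t \<Longrightarrow> f t \<le> g t) \<Longrightarrow> avg f T \<le> avg g T" for f g :: "nat \<Rightarrow> real"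
  unfolding avg_real by (intro mult_left_mono sum_mono) auto

lemma avg_sum: "avg (\<lambda>t. \<Sum>k\<in>K. f k t) T = (\<Sum>k\<in>K. avg (f k) T)"
  by (simp add: avg_def sum.swap[of _ K] scaleR_sum_right)

lemma avg_Pair: "avg (\<lambda>t. (f t, g t)) T = (avg f T, avg g T)"
  by (simp add: avg_def fst_sum snd_sum prod_eq_iff)

lemma avg_cong: "(\<And>t. 1 \<le> t \<Longrightarrow> f t = g t) \<Longrightarrow> avg f T = avg g T"
  unfolding avg_def by (metis atLeastAtMost_iff sum.cong)

lemma tendsto_avg_const: "(\<lambda>T. avg (\<lambda>t. c) T) \<longlonglongrightarrow> c"
proof (rule Lim_transform_eventually[OF tendsto_const])
  show "\<forall>\<^sub>F T in sequentially. c = avg (\<lambda>t. c) T"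
    using eventually_ge_at_top[of "1::nat"] by eventually_elim (simp add: avg_def sum_constant_scaleR)
qed

lemma norm_avg_le: "(\<And>t. 1 \<le> t \<Longrightarrow> norm (f t) \<le> g t) \<Longrightarrow> norm (avg f T) \<le> avg g T"
  unfolding avg_def by (auto intro!: divide_right_mono order_trans[OF norm_sum sum_mono])

lemma avg_tendsto_zero_comparison:
  assumes "\<And>t. 1 \<le> t \<Longrightarrow> norm (f t) \<le> g t" and "(\<lambda>T. avg g T) \<longlonglongrightarrow> 0"
  shows "(\<lambda>T. avg f T) \<longlonglongrightarrow> 0"
  using assms by (intro Lim_null_comparison[OF _ assms(2)] always_eventually allI norm_avg_le)

lemma abs_sum_diff_le:
  fixes x :: "nat \<Rightarrow> real"
  assumes "\<And>t. \<bar>x t\<bar> \<le> 1" and "m \<le> T"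
  shows "\<bar>(\<Sum>t=1..T. x t) - (\<Sum>t=1..m. x t)\<bar> \<le> real (T - m)"
proof -
  have "(\<Sum>t=1..T. x t) - (\<Sum>t=1..m. x t) = (\<Sum>t=m+1..m+(T-m). x t)"
    using sum.ub_add_nat[of 1 m x "T - m"] assms(2) by simp
  also have "\<bar>\<dots>\<bar> \<le> (\<Sum>t=m+1..m+(T-m). 1)"
    using assms(1) by (intro order_trans[OF sum_abs] sum_mono) auto
  finally show ?thesis by simp
qed

lemma filterlim_floor_sqrt: "filterlim floor_sqrt at_top sequentially"
  unfolding filterlim_at_top
  by (metis eventually_sequentially le_floor_sqrtI)

text \<open>Between consecutive squares \<open>k\<^sup>2 \<le> T < (k + 1)\<^sup>2\<close> the partial sums move by at most \<open>2k\<close>,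
  which is negligible against \<open>T \<ge> k\<^sup>2\<close>.\<close>
lemma avg_tendsto_zero_of_squares:
  fixes x :: "nat \<Rightarrow> real"
  assumes bnd: "\<And>t. \<bar>x t\<bar> \<le> 1" and sq: "(\<lambda>k. avg x (k\<^sup>2)) \<longlonglongrightarrow> 0"
  shows "(\<lambda>T. avg x T) \<longlonglongrightarrow> 0"
proof (rule Lim_null_comparison)
  define S where "S T = (\<Sum>t=1..T. x t)" for T
  have "(\<lambda>k. \<bar>avg x (k\<^sup>2)\<bar> + 2 / real k) \<longlonglongrightarrow> 0 + 0"
    by (intro tendsto_add tendsto_rabs_zero sq lim_const_over_n)
  then show "(\<lambda>T. \<bar>avg x ((floor_sqrt T)\<^sup>2)\<bar> + 2 / real (floor_sqrt T)) \<longlonglongrightarrow> 0"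
    using filterlim_compose[OF _ filterlim_floor_sqrt] by simp
  show "\<forall>\<^sub>F T in sequentially. norm (avg x T) \<le> \<bar>avg x ((floor_sqrt T)\<^sup>2)\<bar> + 2 / real (floor_sqrt T)"
  proof (rule eventually_mono[OF eventually_ge_at_top[of 1]])
    fix T :: nat assume T: "1 \<le> T"
    define k where "k = floor_sqrt T"
    have k: "1 \<le> k" "k\<^sup>2 \<le> T" "T \<le> k\<^sup>2 + 2 * k"
      using T Suc_floor_sqrt_power2_gt[of T] le_floor_sqrtI[of 1 T] floor_sqrt_power2_le[of T]
      by (auto simp: k_def power2_eq_square)
    have Tk: "real (k\<^sup>2) \<le> real T" "0 < real (k\<^sup>2)" using k by (auto simp del: of_nat_power)
    have tail: "\<bar>S T - S (k\<^sup>2)\<bar> \<le> 2 * real k"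
    proof -
      have "T - k\<^sup>2 \<le> 2 * k" using k(3) by linarith
      then have "real (T - k\<^sup>2) \<le> 2 * real k" by (metis of_nat_mono of_nat_mult of_nat_numeral)
      then show ?thesis using abs_sum_diff_le[of x, OF bnd k(2)] unfolding S_def by linarith
    qed
    have "\<bar>S T\<bar> / real T \<le> \<bar>S (k\<^sup>2)\<bar> / real T + \<bar>S T - S (k\<^sup>2)\<bar> / real T"
      by (simp add: add_divide_distrib[symmetric] divide_right_mono abs_triangle_ineq2_sym
          order_trans[OF abs_triangle_ineq])
    also have "\<dots> \<le> \<bar>S (k\<^sup>2)\<bar> / real (k\<^sup>2) + 2 * real k / real (k\<^sup>2)"
      using Tk tail by (intro add_mono frac_le) auto
    also have "2 * real k / real (k\<^sup>2) = 2 / real k"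
      using k by (simp add: power2_eq_square)
    finally show "norm (avg x T) \<le> \<bar>avg x ((floor_sqrt T)\<^sup>2)\<bar> + 2 / real (floor_sqrt T)"
      by (simp add: avg_real S_def k_def abs_mult)
  qed
qed

section \<open>A strong law for bounded orthogonal sequences\<close>

lemma AE_tendsto_zero_of_summable_integrals:
  fixes Y :: "nat \<Rightarrow> 'a \<Rightarrow> real"
  assumes [measurable]: "\<And>m. Y m \<in> borel_measurable M"
    and nonneg: "\<And>m x. 0 \<le> Y m x" and int: "\<And>m. integrable M (Y m)"
    and summable: "summable (\<lambda>m. \<integral>x. Y m x \<partial>M)"
  shows "AE x in M. (\<lambda>m. Y m x) \<longlonglongrightarrow> 0"
proof -
  have "(\<integral>\<^sup>+x. (\<Sum>m. ennreal (Y m x)) \<partial>M) = (\<Sum>m. \<integral>\<^sup>+x. ennreal (Y m x) \<partial>M)"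
    by (rule nn_integral_suminf) simp
  also have "\<dots> = (\<Sum>m. ennreal (\<integral>x. Y m x \<partial>M))"
    using nonneg by (intro suminf_cong nn_integral_eq_integral int AE_I2)
  also have "\<dots> \<noteq> \<infinity>"
    unfolding infinity_ennreal_def by (intro ennreal_suminf_neq_top summable integral_nonneg_AE AE_I2 nonneg)
  finally have "AE x in M. (\<Sum>m. ennreal (Y m x)) \<noteq> \<infinity>"
    by (rule nn_integral_PInf_AE[rotated]) measurable
  then show ?thesis
  proof (rule AE_mp, intro AE_I2 impI)
    fix x assume "(\<Sum>m. ennreal (Y m x)) \<noteq> \<infinity>"
    then have "summable (\<lambda>m. Y m x)" using nonneg by (intro summable_suminf_not_top) auto
    then show "(\<lambda>m. Y m x) \<longlonglongrightarrow> 0" by (rule summable_LIMSEQ_zero)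
  qed
qed

lemma (in prob_space) integral_square_sum_orthogonal_le:
  fixes X :: "nat \<Rightarrow> 'a \<Rightarrow> real"
  assumes [measurable]: "\<And>t. X t \<in> borel_measurable M"
    and bnd: "\<And>t x. x \<in> space M \<Longrightarrow> \<bar>X t x\<bar> \<le> 1"
    and orth: "\<And>s t. s \<noteq> t \<Longrightarrow> (\<integral>x. X s x * X t x \<partial>M) = 0"
  shows "(\<integral>x. (\<Sum>t=1..T. X t x)\<^sup>2 \<partial>M) \<le> real T"
proof -
  have int: "integrable M (\<lambda>x. X s x * X t x)" for s t
    using bnd by (intro integrable_const_bound[where B=1]) (auto simp: abs_mult intro!: mult_le_one)
  have diag: "(\<Sum>t=1..T. \<integral>x. X s x * X t x \<partial>M) = (\<integral>x. X s x * X s x \<partial>M)" if "s \<in> {1..T}" for s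
    using that orth by (subst sum.remove[of _ s]) (auto intro: sum.neutral)
  have "(\<integral>x. (\<Sum>t=1..T. X t x)\<^sup>2 \<partial>M) = (\<Sum>s=1..T. \<Sum>t=1..T. \<integral>x. X s x * X t x \<partial>M)"
    by (simp add: power2_eq_square sum_product int)
  also have "\<dots> = (\<Sum>s=1..T. \<integral>x. X s x * X s x \<partial>M)"
    by (rule sum.cong[OF refl diag])
  also have "\<dots> \<le> (\<Sum>s=1..T. \<integral>x. 1 \<partial>M)"
  proof (intro sum_mono integral_mono int)
    fix s x assume "x \<in> space M"
    then show "X s x * X s x \<le> 1"
      using mult_le_one[OF bnd abs_ge_zero bnd] by (metis abs_mult_self_eq)
  qed simp
  finally show ?thesis by (simp add: prob_space)
qed

text \<open>Along the squares \<open>T = k\<^sup>2\<close> the second moments of the averages are at most \<open>1/k\<^sup>2\<close>, hence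
  summable; \<open>avg_tendsto_zero_of_squares\<close> fills the gaps between squares.\<close>
lemma (in prob_space) AE_avg_tendsto_zero_orthogonal:
  fixes X :: "nat \<Rightarrow> 'a \<Rightarrow> real"
  assumes [measurable]: "\<And>t. X t \<in> borel_measurable M"
    and bnd: "\<And>t x. x \<in> space M \<Longrightarrow> \<bar>X t x\<bar> \<le> 1"
    and orth: "\<And>s t. s \<noteq> t \<Longrightarrow> (\<integral>x. X s x * X t x \<partial>M) = 0"
  shows "AE x in M. (\<lambda>T. avg (\<lambda>t. X t x) T) \<longlonglongrightarrow> 0"
proof -
  define Y where "Y k x = (avg (\<lambda>t. X t x) (k\<^sup>2))\<^sup>2" for k x
  have Y_meas[measurable]: "Y k \<in> borel_measurable M" for k
    unfolding Y_def avg_real by measurable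
  have sum_bnd: "\<bar>\<Sum>t=1..T. X t x\<bar> \<le> real T" if "x \<in> space M" for T x
    using abs_sum_diff_le[of "\<lambda>t. X t x" 0 T] bnd[OF that] by simp
  have int: "integrable M (Y k)" for k
  proof (rule integrable_const_bound[where B=1])
    show "AE x in M. norm (Y k x) \<le> 1"
    proof (rule AE_I2)
      fix x assume "x \<in> space M"
      then have "\<bar>avg (\<lambda>t. X t x) (k\<^sup>2)\<bar> \<le> 1"
        using sum_bnd[of x "k\<^sup>2"] by (cases "k = 0") (simp_all add: avg_real abs_mult divide_le_eq_1)
      then show "norm (Y k x) \<le> 1"
        unfolding Y_def by (simp add: abs_square_le_1)
    qed
  qed simp
  have EY: "(\<integral>x. Y k x \<partial>M) \<le> 1 / (real k)\<^sup>2" for k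
  proof (cases "k = 0")
    case False
    have "(\<integral>x. Y k x \<partial>M) = (\<integral>x. (\<Sum>t=1..k\<^sup>2. X t x)\<^sup>2 \<partial>M) / ((real k)\<^sup>2)\<^sup>2"
      unfolding Y_def avg_real by (simp add: power_divide)
    also have "\<dots> \<le> real (k\<^sup>2) / ((real k)\<^sup>2)\<^sup>2"
      by (intro divide_right_mono integral_square_sum_orthogonal_le bnd orth) auto
    finally show ?thesis using False by (simp add: power2_eq_square)
  qed (simp add: Y_def avg_def)
  have summable: "summable (\<lambda>k. \<integral>x. Y k x \<partial>M)"
  proof (rule summable_comparison_test[OF _ inverse_power_summable[of 2]])
    show "\<exists>N. \<forall>k\<ge>N. norm (\<integral>x. Y k x \<partial>M) \<le> inverse (real k ^ 2)"
      using EY by (auto simp: Y_def inverse_eq_divide)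
  qed simp
  have "AE x in M. (\<lambda>k. Y k x) \<longlonglongrightarrow> 0"
    by (rule AE_tendsto_zero_of_summable_integrals[OF Y_meas _ int summable]) (simp add: Y_def)
  then show ?thesis
  proof (rule AE_mp, intro AE_I2 impI)
    fix x assume "x \<in> space M" and "(\<lambda>k. Y k x) \<longlonglongrightarrow> 0"
    then have "(\<lambda>k. \<bar>avg (\<lambda>t. X t x) (k\<^sup>2)\<bar>) \<longlonglongrightarrow> 0"
      using tendsto_real_sqrt[of "\<lambda>k. Y k x" 0] by (simp add: Y_def)
    then have "(\<lambda>k. avg (\<lambda>t. X t x) (k\<^sup>2)) \<longlonglongrightarrow> 0"
      by (rule tendsto_rabs_zero_cancel)
    then show "(\<lambda>T. avg (\<lambda>t. X t x) T) \<longlonglongrightarrow> 0"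
      using \<open>x \<in> space M\<close> bnd by (intro avg_tendsto_zero_of_squares) auto
  qed
qed

section \<open>Martingale differences\<close>

lemma (in prob_space) integral_mult_indicator_minus_cond_prob:
  assumes sub: "subalgebra M F" and A: "A \<in> sets M"
    and law: "\<And>E. E \<in> sets F \<Longrightarrow> measure M (A \<inter> E) = (LINT x:E|M. g x)"
    and g: "g \<in> borel_measurable F" "\<And>x. x \<in> space M \<Longrightarrow> \<bar>g x\<bar> \<le> 1"
    and h: "h \<in> borel_measurable F" "\<And>x. x \<in> space M \<Longrightarrow> \<bar>h x\<bar> \<le> 1"
  shows "(\<integral>x. h x * (indicator A x - g x) \<partial>M) = 0"
proof -
  interpret finite_measure_subalgebra M F
    by unfold_locales (rule sub)
  have [measurable]: "g \<in> borel_measurable M" "h \<in> borel_measurable M" "A \<in> sets M"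
    using measurable_from_subalg[OF sub] g h A by auto
  have int_g: "integrable M g"
    using g by (intro integrable_const_bound[where B=1]) auto
  have int_A: "integrable M (indicator A :: 'a \<Rightarrow> real)"
    by (intro integrable_const_bound[where B=1]) (auto simp: indicator_def)
  have int_hA: "integrable M (\<lambda>x. h x * indicator A x)"
    using h by (intro integrable_const_bound[where B=1]) (auto simp: indicator_def)
  have int_hg: "integrable M (\<lambda>x. h x * g x)"
    using g h by (intro integrable_const_bound[where B=1]) (auto simp: abs_mult intro!: mult_le_one)
  have "AE x in M. real_cond_exp M F (indicator A) x = g x"
  proof (rule real_cond_exp_charact[OF _ int_A int_g g(1)])
    fix E assume E: "E \<in> sets F"
    then have "E \<in> sets M" using sub by (auto simp: subalgebra_def)
    then have "(LINT x:E|M. indicator A x) = measure M (A \<inter> E)"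
      unfolding set_lebesgue_integral_def by (simp add: indicator_inter_arith[symmetric] mult.commute)
    then show "(LINT x:E|M. indicator A x) = (LINT x:E|M. g x)" using law[OF E] by simp
  qed
  then have "(\<integral>x. h x * g x \<partial>M) = (\<integral>x. h x * real_cond_exp M F (indicator A) x \<partial>M)"
    by (intro integral_cong_AE) auto
  also have "\<dots> = (\<integral>x. h x * indicator A x \<partial>M)"
    by (rule real_cond_exp_intg(2)[OF int_hA h(1)]) simp
  finally show ?thesis
    using int_hA int_hg by (simp add: right_diff_distrib)
qed

lemma measurable_filtration_mono:
  assumes sub: "\<forall>t. subalgebra M (G t)" and mono: "\<forall>t. sets (G t) \<subseteq> sets (G (Suc t))"
    and "s \<le> t" and f: "f \<in> borel_measurable (G s)"
  shows "f \<in> borel_measurable (G t)"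
proof (rule measurable_from_subalg[OF _ f])
  have "sets (G s) \<subseteq> sets (G t)"
    using lift_Suc_mono_le[of "\<lambda>t. sets (G t)", OF _ \<open>s \<le> t\<close>] mono by blast
  then show "subalgebra (G t) (G s)"
    using sub by (auto simp: subalgebra_def)
qed

lemma orthogonal_if_conditionally_centered:
  fixes X :: "nat \<Rightarrow> 'a \<Rightarrow> real"
  assumes sub: "\<forall>t. subalgebra M (G t)" and mono: "\<forall>t. sets (G t) \<subseteq> sets (G (Suc t))"
    and meas: "\<And>t. X t \<in> borel_measurable (G (Suc t))"
    and bnd: "\<And>t x. x \<in> space M \<Longrightarrow> \<bar>X t x\<bar> \<le> 1"
    and centered: "\<And>t h. h \<in> borel_measurable (G t) \<Longrightarrow> (\<And>x. x \<in> space M \<Longrightarrow> \<bar>h x\<bar> \<le> 1)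
                     \<Longrightarrow> (\<integral>x. h x * X t x \<partial>M) = 0"
    and "s \<noteq> t"
  shows "(\<integral>x. X s x * X t x \<partial>M) = 0"
proof -
  have *: "(\<integral>x. X i x * X j x \<partial>M) = 0" if "i < j" for i j
    using that by (intro centered bnd measurable_filtration_mono[OF sub mono _ meas]) auto
  show ?thesis
  proof (cases "s < t")
    case False
    then show ?thesis using *[of t s] \<open>s \<noteq> t\<close> by (simp add: mult.commute)
  qed (rule *)
qed

section \<open>Quantiles on the grid\<close>

lemma Aset_finite: "finite (Aset n)"
proof -
  have "Aset n = (\<lambda>k. real k / real (n+1)) ` {..n+1}" unfolding Aset_def by auto
  then show ?thesis by simp
qed

lemma cdf_grid:
  assumes "j \<le> n+1"
  shows "cdf n p (real j / real (n+1)) = (\<Sum>k=1..j. p k)"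
proof -
  have "cdf n p (real j / real (n+1)) = (\<Sum>k\<in>{1..n+1}. if k \<le> j then p k else 0)"
    unfolding cdf_def by (rule sum.cong) (auto simp: bval_def divide_le_cancel)
  also have "\<dots> = (\<Sum>k\<in>{k\<in>{1..n+1}. k \<le> j}. p k)"
    by (rule sum.inter_filter[symmetric]) simp
  also have "{k\<in>{1..n+1}. k \<le> j} = {1..j}" using assms by auto
  finally show ?thesis .
qed

lemma cdf_qunif_grid:
  assumes "j \<le> n+1"
  shows "cdf n (qunif n) (real j / real (n+1)) = real j / real (n+1)"
proof -
  have "cdf n (qunif n) (real j / real (n+1)) = (\<Sum>k=1..j. 1 / real (n+1))"
    unfolding cdf_grid[OF assms] using assms by (intro sum.cong) (auto simp: qunif_def)
  then show ?thesis by simp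
qed

lemma Quant_in_Aset:
  assumes "0 \<le> \<alpha>"
  shows "Quant n \<alpha> p \<in> Aset n"
proof -
  have "0 \<in> {a \<in> Aset n. cdf n p a \<le> \<alpha>}"
    using cdf_grid[of 0 n p] assms by (auto simp: Aset_def intro!: exI[of _ 0])
  then show ?thesis
    unfolding Quant_def using Max_in[of "{a \<in> Aset n. cdf n p a \<le> \<alpha>}"] Aset_finite by auto
qed

lemma abs_LebC_le:
  assumes "a \<in> Aset n"
  shows "\<bar>LebC n s a\<bar> \<le> 2 * (\<Sum>i\<le>n+1. \<bar>s i\<bar>)"
proof -
  obtain k where k: "k \<le> n+1" "a = real k / real (n+1)" using assms unfolding Aset_def by auto
  then have "real (n+1) * (1 - a) = real (n + 1 - k)" by (simp add: field_simps of_nat_diff)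
  then have "nat \<lceil>real (n + 1) * (1 - a)\<rceil> = n + 1 - k" by simp
  moreover have "\<bar>s (n+1-k)\<bar> \<le> (\<Sum>i\<le>n+1. \<bar>s i\<bar>)"
    by (rule member_le_sum[where f="\<lambda>i. \<bar>s i\<bar>"]) auto
  ultimately show ?thesis unfolding LebC_def by simp
qed

lemma LebC_rfun: "LebC n s (rfun n \<alpha>) = LebC n s \<alpha>"
proof -
  define c where "c = nat \<lceil>real (n + 1) * (1 - \<alpha>)\<rceil>"
  have "real (n + 1) * (1 - rfun n \<alpha>) = real c"
    unfolding rfun_def c_def[symmetric] by (simp add: field_simps)
  then show ?thesis unfolding LebC_def c_def by simp
qed

lemma rfun_bracket:
  assumes "0 < \<alpha>" "\<alpha> < 1" "\<alpha> \<notin> Aset n"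
  obtains j where "j \<le> n" "rfun n \<alpha> = real j / real (n+1)"
    "real j / real (n+1) < \<alpha>" "\<alpha> < real (j+1) / real (n+1)"
proof -
  define N where "N = real (n + 1)"
  define x where "x = N * (1 - \<alpha>)"
  define c where "c = nat \<lceil>x\<rceil>"
  have N: "N > 0" by (simp add: N_def)
  have x: "0 < x" "x < N" using assms(1,2) N by (simp_all add: x_def)
  have cx: "real c - 1 < x" "x \<le> real c"
    using x by (simp_all add: c_def ceiling_correct)
  have "real c < real (n + 2)" using cx x by (simp add: N_def)
  then have c_le: "c \<le> n + 1" by simp
  have "x \<noteq> real c"
  proof
    assume "x = real c"
    then have "N * \<alpha> = N - real c" by (simp add: x_def algebra_simps)
    then have "\<alpha> = real (n + 1 - c) / N"
      using N c_le by (simp add: eq_divide_eq of_nat_diff N_def mult.commute)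
    then have "\<alpha> \<in> Aset n" unfolding Aset_def N_def using diff_le_self by blast
    then show False using assms(3) by simp
  qed
  with cx have c: "real c - 1 < x" "x < real c" by auto
  with x have "1 \<le> c" by (auto simp: N_def)
  show thesis
  proof
    show "n + 1 - c \<le> n" using \<open>1 \<le> c\<close> by simp
    show "rfun n \<alpha> = real (n + 1 - c) / real (n + 1)"
      using \<open>c \<le> n + 1\<close> by (simp add: rfun_def c_def x_def N_def field_simps of_nat_diff)
    show "real (n + 1 - c) / real (n + 1) < \<alpha>" "\<alpha> < real (n + 1 - c + 1) / real (n + 1)"
      using c \<open>c \<le> n + 1\<close> \<open>1 \<le> c\<close> N
      by (simp_all add: x_def N_def field_simps)
  qed
qed

lemma rfun_bracket_margin:
  assumes "0 < \<alpha>" "\<alpha> < 1" "\<alpha> \<notin> Aset n"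
  obtains j \<epsilon> where "j \<le> n" "rfun n \<alpha> = real j / real (n+1)" "0 < \<epsilon>"
    "real j / real (n+1) + real (n+1) * \<epsilon> < \<alpha>" "\<alpha> + real (n+1) * \<epsilon> < real (j+1) / real (n+1)"
proof -
  obtain j where j: "j \<le> n" "rfun n \<alpha> = real j / real (n+1)"
      "real j / real (n+1) < \<alpha>" "\<alpha> < real (j+1) / real (n+1)"
    using rfun_bracket[OF assms] .
  define g where "g = min (\<alpha> - real j / real (n+1)) (real (j+1) / real (n+1) - \<alpha>)"
  define \<epsilon> where "\<epsilon> = g / (2 * real (n+1))"
  have g: "0 < g" "g \<le> \<alpha> - real j / real (n+1)" "g \<le> real (j+1) / real (n+1) - \<alpha>"
    using j(3,4) by (simp_all add: g_def)
  have N\<epsilon>: "real (n+1) * \<epsilon> = g / 2" by (simp add: \<epsilon>_def field_simps)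
  have "real j / real (n+1) + real (n+1) * \<epsilon> < \<alpha>" "\<alpha> + real (n+1) * \<epsilon> < real (j+1) / real (n+1)"
    using g unfolding N\<epsilon> by simp_all
  moreover have "0 < \<epsilon>" using g by (simp add: \<epsilon>_def)
  ultimately show thesis by (intro that[OF j(1,2)])
qed

definition near_unif :: "nat \<Rightarrow> real \<Rightarrow> (nat \<Rightarrow> real) \<Rightarrow> bool" where
  "near_unif n \<epsilon> p \<longleftrightarrow> (\<forall>k\<in>{1..n+1}. \<bar>p k - 1 / real (n+1)\<bar> \<le> \<epsilon>)"

lemma near_unif_qunif: "0 \<le> \<epsilon> \<Longrightarrow> near_unif n \<epsilon> (qunif n)"
  by (simp add: near_unif_def qunif_def)

lemma cdf_grid_near_unif:
  assumes "near_unif n \<epsilon> p" and "i \<le> n+1"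
  shows "\<bar>cdf n p (real i / real (n+1)) - real i / real (n+1)\<bar> \<le> real (n+1) * \<epsilon>"
proof -
  have "\<bar>cdf n p (real i / real (n+1)) - real i / real (n+1)\<bar> = \<bar>\<Sum>k=1..i. p k - 1 / real (n+1)\<bar>"
    unfolding cdf_grid[OF assms(2)] by (simp add: sum_subtractf)
  also have "\<dots> \<le> (\<Sum>k=1..i. \<epsilon>)"
    using assms unfolding near_unif_def by (intro order_trans[OF sum_abs] sum_mono) auto
  also have "\<dots> \<le> real (n+1) * \<epsilon>"
    using assms unfolding near_unif_def
    by (auto intro!: mult_right_mono order_trans[OF abs_ge_zero])
  finally show ?thesis .
qed

text \<open>A near-uniform \<open>p\<close> has its cumulative distribution function within \<open>(n+1)\<epsilon>\<close> of the uniform one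
  at every grid point, so it crosses level \<open>\<alpha>\<close> between the same two grid points.\<close>
lemma Quant_eq_if_near_unif:
  assumes j: "j \<le> n" and near: "near_unif n \<epsilon> p"
    and below: "real j / real (n+1) + real (n+1) * \<epsilon> < \<alpha>"
    and above: "\<alpha> + real (n+1) * \<epsilon> < real (j+1) / real (n+1)"
  shows "Quant n \<alpha> p = real j / real (n+1)"
  unfolding Quant_def
proof (rule Max_eqI)
  show "finite {a \<in> Aset n. cdf n p a \<le> \<alpha>}" using Aset_finite by simp
  show "real j / real (n+1) \<in> {a \<in> Aset n. cdf n p a \<le> \<alpha>}"
    using j cdf_grid_near_unif[OF near, of j] below by (auto simp: Aset_def)
  fix a assume "a \<in> {a \<in> Aset n. cdf n p a \<le> \<alpha>}"
  then obtain i where i: "i \<le> n+1" "a = real i / real (n+1)" and "cdf n p a \<le> \<alpha>"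
    unfolding Aset_def by auto
  then have "real i / real (n+1) < real (j+1) / real (n+1)"
    using cdf_grid_near_unif[OF near i(1)] above by auto
  then show "a \<le> real j / real (n+1)"
    using i(2) by (simp add: divide_le_cancel divide_less_cancel)
qed

lemma Quant_qunif:
  assumes "0 < \<alpha>" "\<alpha> < 1" "\<alpha> \<notin> Aset n"
  shows "Quant n \<alpha> (qunif n) = rfun n \<alpha>"
proof -
  obtain j where "j \<le> n" "rfun n \<alpha> = real j / real (n+1)"
    "real j / real (n+1) < \<alpha>" "\<alpha> < real (j+1) / real (n+1)"
    using rfun_bracket[OF assms] .
  then show ?thesis
    using Quant_eq_if_near_unif[OF _ near_unif_qunif[of 0], of j] by simp
qed

lemma mstar_qunif:
  assumes "0 < \<alpha>" "\<alpha> < 1" "\<alpha> \<notin> Aset n"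
  shows "mstar n s \<alpha> (qunif n) = (rfun n \<alpha>, LebC n s \<alpha>)"
proof -
  obtain j where "j \<le> n" "rfun n \<alpha> = real j / real (n+1)"
    using rfun_bracket[OF assms] .
  then have "cdf n (qunif n) (rfun n \<alpha>) = rfun n \<alpha>"
    using cdf_qunif_grid[of j n] by simp
  then show ?thesis
    unfolding mstar_def Quant_qunif[OF assms] LebC_rfun by simp
qed

section \<open>The calibration game\<close>

lemma Delta_bounds:
  assumes "p \<in> Delta n"
  shows "0 \<le> p k" "p k \<le> 1"
proof -
  show "0 \<le> p k" using assms unfolding Delta_def by auto
  show "p k \<le> 1"
  proof (cases "k \<in> {1..n+1}")
    case True
    then have "p k \<le> (\<Sum>j=1..n+1. p j)"
      using assms by (intro member_le_sum) (auto simp: Delta_def)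
    then show ?thesis using assms unfolding Delta_def by simp
  qed (use assms in \<open>auto simp: Delta_def\<close>)
qed

lemma dirac_vec_eq_indicator:
  "k \<in> {1..n+1} \<Longrightarrow> dirac_vec n x k = indicator {y. y = bval n k} x"
  by (auto simp: dirac_vec_def)

locale calibration_game = prob_space M
  for M :: "'w measure" and G :: "nat \<Rightarrow> 'w measure" and n :: nat
    and q z :: "nat \<Rightarrow> 'w \<Rightarrow> nat \<Rightarrow> real" and b :: "nat \<Rightarrow> 'w \<Rightarrow> real" +
  assumes G_sub: "\<forall>t. subalgebra M (G t)"
    and G_mono: "\<forall>t. sets (G t) \<subseteq> sets (G (Suc t))"
    and q_meas: "\<forall>t\<ge>1. q t \<in> G t \<rightarrow>\<^sub>M borel"
    and z_meas: "\<forall>t\<ge>1. z t \<in> G t \<rightarrow>\<^sub>M borel"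
    and b_meas: "\<forall>t\<ge>1. b t \<in> G (Suc t) \<rightarrow>\<^sub>M borel"
    and q_Delta: "\<forall>t\<ge>1. \<forall>\<omega>\<in>space M. q t \<omega> \<in> Delta n"
    and b_law: "\<forall>t\<ge>1. \<forall>k\<in>{1..n + 1}. \<forall>E\<in>sets (G t).
        measure M ({\<omega>\<in>space M. b t \<omega> = bval n k} \<inter> E) = (LINT \<omega>:E|M. q t \<omega> k)"
begin

lemma q_coord_measurable: "1 \<le> t \<Longrightarrow> (\<lambda>\<omega>. q t \<omega> k) \<in> borel_measurable (G t)"
  using q_meas by (auto intro: measurable_product_then_coordinatewise)

lemma abs_q_coord_le: "1 \<le> t \<Longrightarrow> \<omega> \<in> space M \<Longrightarrow> \<bar>q t \<omega> k\<bar> \<le> 1"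
  using Delta_bounds[of "q t \<omega>" n k] q_Delta by auto

lemma hit_event_measurable: "1 \<le> t \<Longrightarrow> {\<omega>\<in>space M. b t \<omega> = v} \<in> sets (G (Suc t))"
proof -
  assume "1 \<le> t"
  then have [measurable]: "b t \<in> borel_measurable (G (Suc t))" using b_meas by simp
  have "{\<omega>\<in>space M. b t \<omega> = v} = {\<omega>\<in>space (G (Suc t)). b t \<omega> = v}"
    using G_sub by (simp add: subalgebra_def)
  then show ?thesis by simp
qed

definition increment :: "(nat \<Rightarrow> real) set \<Rightarrow> nat \<Rightarrow> nat \<Rightarrow> 'w \<Rightarrow> real" where
  "increment H k t \<omega> = (if 1 \<le> t
     then indicator H (z t \<omega>) * (indicator {\<omega>\<in>space M. b t \<omega> = bval n k} \<omega> - q t \<omega> k) else 0)"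

lemma increment_measurable:
  assumes "H \<in> sets borel"
  shows "increment H k t \<in> borel_measurable (G (Suc t))"
proof (cases "1 \<le> t")
  case True
  note mono = measurable_filtration_mono[OF G_sub G_mono le_SucI[OF order_refl]]
  have [measurable]: "z t \<in> borel_measurable (G t)" using True z_meas by simp
  have "(\<lambda>\<omega>. indicator H (z t \<omega>) :: real) \<in> borel_measurable (G t)"
    using assms by measurable
  note [measurable] = mono[OF this] mono[OF q_coord_measurable[OF True]] hit_event_measurable[OF True]
  have eq: "increment H k t = (\<lambda>\<omega>. indicator H (z t \<omega>)
      * (indicator {\<omega>\<in>space M. b t \<omega> = bval n k} \<omega> - q t \<omega> k))"
    using True by (auto simp: increment_def)
  show ?thesis unfolding eq by measurable
next
  case False
  then have "increment H k t = (\<lambda>_. 0)" by (auto simp: increment_def)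
  then show ?thesis by simp
qed

lemma abs_increment_le: "\<omega> \<in> space M \<Longrightarrow> \<bar>increment H k t \<omega>\<bar> \<le> 1"
  using Delta_bounds[of "q t \<omega>" n k] q_Delta by (auto simp: increment_def indicator_def)

text \<open>Centring given the past is exactly the conditional-law hypothesis \<open>b_law\<close>.\<close>
lemma integral_mult_increment:
  assumes H: "H \<in> sets borel" and k: "k \<in> {1..n+1}"
    and h: "h \<in> borel_measurable (G t)" "\<And>\<omega>. \<omega> \<in> space M \<Longrightarrow> \<bar>h \<omega>\<bar> \<le> 1"
  shows "(\<integral>\<omega>. h \<omega> * increment H k t \<omega> \<partial>M) = 0"
proof (cases "1 \<le> t")
  case True
  define A where "A = {\<omega>\<in>space M. b t \<omega> = bval n k}"
  have [measurable]: "z t \<in> borel_measurable (G t)" using True z_meas by simp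
  have "(\<integral>\<omega>. (h \<omega> * indicator H (z t \<omega>)) * (indicator A \<omega> - q t \<omega> k) \<partial>M) = 0"
  proof (rule integral_mult_indicator_minus_cond_prob)
    show "subalgebra M (G t)" using G_sub by simp
    show "A \<in> sets M"
      using hit_event_measurable[OF True] G_sub by (auto simp: A_def subalgebra_def)
    show "measure M (A \<inter> E) = (LINT \<omega>:E|M. q t \<omega> k)" if "E \<in> sets (G t)" for E
      using b_law True k that by (simp add: A_def)
    show "(\<lambda>\<omega>. h \<omega> * indicator H (z t \<omega>)) \<in> borel_measurable (G t)"
      using h(1) H by measurable
    show "\<bar>h \<omega> * indicator H (z t \<omega>)\<bar> \<le> 1" if "\<omega> \<in> space M" for \<omega>
      using h(2)[OF that] by (auto simp: indicator_def)
  qed (use q_coord_measurable True abs_q_coord_le in auto)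
  then show ?thesis using True by (simp add: increment_def A_def mult.assoc)
qed (simp add: increment_def)

text \<open>The increments of a calibration test along the opponent's own probabilities form a bounded
  martingale difference sequence, hence obey the strong law.\<close>
lemma AE_avg_increment_tendsto_zero:
  assumes H: "H \<in> sets borel" and k: "k \<in> {1..n+1}"
  shows "AE \<omega> in M. (\<lambda>T. avg (\<lambda>t. indicator H (z t \<omega>) * (dirac_vec n (b t \<omega>) k - q t \<omega> k)) T)
           \<longlonglongrightarrow> 0"
proof -
  have "AE \<omega> in M. (\<lambda>T. avg (\<lambda>t. increment H k t \<omega>) T) \<longlonglongrightarrow> 0"
  proof (rule AE_avg_tendsto_zero_orthogonal)
    show "increment H k t \<in> borel_measurable M" for t
      using measurable_from_subalg[OF _ increment_measurable[OF H]] G_sub by blast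
    show "(\<integral>\<omega>. increment H k s \<omega> * increment H k t \<omega> \<partial>M) = 0" if "s \<noteq> t" for s t
      using G_sub G_mono increment_measurable[OF H] abs_increment_le integral_mult_increment[OF H k] that
      by (rule orthogonal_if_conditionally_centered)
  qed (rule abs_increment_le)
  then show ?thesis
  proof (rule AE_mp, intro AE_I2 impI)
    fix \<omega> assume "\<omega> \<in> space M"
    then have "avg (\<lambda>t. increment H k t \<omega>) T
        = avg (\<lambda>t. indicator H (z t \<omega>) * (dirac_vec n (b t \<omega>) k - q t \<omega> k)) T" for T
      using k by (intro avg_cong) (simp add: increment_def dirac_vec_eq_indicator indicator_def)
    then show "(\<lambda>T. avg (\<lambda>t. increment H k t \<omega>) T) \<longlonglongrightarrow> 0
        \<Longrightarrow> (\<lambda>T. avg (\<lambda>t. indicator H (z t \<omega>) * (dirac_vec n (b t \<omega>) k - q t \<omega> k)) T) \<longlonglongrightarrow> 0"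
      by simp
  qed
qed

end

section \<open>Pathwise behaviour of BOACI\<close>

definition above_unif :: "nat \<Rightarrow> real \<Rightarrow> nat \<Rightarrow> (nat \<Rightarrow> real) set" where
  "above_unif n \<epsilon> k = {p. 1 / real (n+1) + \<epsilon> \<le> p k}"

definition below_unif :: "nat \<Rightarrow> real \<Rightarrow> nat \<Rightarrow> (nat \<Rightarrow> real) set" where
  "below_unif n \<epsilon> k = {p. p k \<le> 1 / real (n+1) - \<epsilon>}"

lemma not_near_unifE:
  assumes "\<not> near_unif n \<epsilon> p"
  obtains k where "k \<in> {1..n+1}" "p \<in> above_unif n \<epsilon> k \<union> below_unif n \<epsilon> k"
  using assms by (force simp: near_unif_def above_unif_def below_unif_def abs_real_def split: if_splits)

lemma abs_le_eucl_d:
  assumes "k \<in> {1..n+1}"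
  shows "\<bar>p k - q k\<bar> \<le> eucl_d n p q"
proof -
  have "(p k - q k)\<^sup>2 \<le> (\<Sum>i=1..n+1. (p i - q i)\<^sup>2)"
    using assms by (intro member_le_sum) auto
  then show ?thesis unfolding eucl_d_def by (metis real_sqrt_abs real_sqrt_le_mono)
qed

lemma indicator_le_eq_sum_dirac_vec:
  assumes "x \<in> Bset n"
  shows "(if x \<le> a then 1 else 0) = (\<Sum>k=1..n+1. dirac_vec n x k * (if bval n k \<le> a then 1 else 0))"
proof -
  obtain k0 where k0: "k0 \<in> {1..n+1}" "x = bval n k0" using assms unfolding Bset_def by auto
  have "dirac_vec n x k = (if k = k0 then 1 else 0)" if "k \<in> {1..n+1}" for k
    using k0 that by (auto simp: dirac_vec_def bval_def)
  then have "(\<Sum>k=1..n+1. dirac_vec n x k * (if bval n k \<le> a then 1 else 0))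
      = (\<Sum>k=1..n+1. if k = k0 then (if bval n k \<le> a then 1 else 0) else 0)"
    by (intro sum.cong) auto
  then show ?thesis using k0 by simp
qed

lemma avg_weighted_dev_tendsto_zero:
  assumes k: "k \<in> {1..n+1}" and w: "\<And>t. \<bar>w t\<bar> \<le> 1"
    and dist: "(\<lambda>T. avg (\<lambda>t. eucl_d n (Q t) (qunif n)) T) \<longlonglongrightarrow> 0"
  shows "(\<lambda>T. avg (\<lambda>t. w t * (Q t k - 1 / real (n+1))) T) \<longlonglongrightarrow> 0"
proof (rule avg_tendsto_zero_comparison[OF _ dist])
  fix t
  have dev: "\<bar>Q t k - 1 / real (n+1)\<bar> \<le> eucl_d n (Q t) (qunif n)"
    using abs_le_eucl_d[OF k, of "Q t" "qunif n"] k by (simp add: qunif_def)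
  show "norm (w t * (Q t k - 1 / real (n+1))) \<le> eucl_d n (Q t) (qunif n)"
    using mult_mono[OF w[of t] dev zero_le_one abs_ge_zero] by (simp add: abs_mult)
qed

lemma avg_indicator_tendsto_zero_if_separated:
  assumes "0 < \<epsilon>" and k: "k \<in> {1..n+1}"
    and sep: "\<And>p. p \<in> H \<Longrightarrow> \<epsilon> \<le> c * (p k - 1 / real (n+1))"
    and dist: "(\<lambda>T. avg (\<lambda>t. eucl_d n (Q t) (qunif n)) T) \<longlonglongrightarrow> 0"
    and lln: "(\<lambda>T. avg (\<lambda>t. indicator H (Z t) * (dirac_vec n (B t) k - Q t k)) T) \<longlonglongrightarrow> 0"
    and cal: "(\<lambda>T. avg (\<lambda>t. indicator H (Z t) * (dirac_vec n (B t) k - Z t k)) T) \<longlonglongrightarrow> 0"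
  shows "(\<lambda>T. avg (\<lambda>t. indicator H (Z t) :: real) T) \<longlonglongrightarrow> 0"
proof (rule Lim_null_comparison)
  define w where "w t = (indicator H (Z t) :: real)" for t
  define v where "v T = avg (\<lambda>t. w t * (Z t k - 1 / real (n+1))) T" for T
  have "(\<lambda>T. avg (\<lambda>t. w t * (dirac_vec n (B t) k - Q t k)) T
        - avg (\<lambda>t. w t * (dirac_vec n (B t) k - Z t k)) T
        + avg (\<lambda>t. w t * (Q t k - 1 / real (n+1))) T) \<longlonglongrightarrow> 0 - 0 + 0"
    using lln cal unfolding w_def
    by (intro tendsto_intros avg_weighted_dev_tendsto_zero[OF k _ dist]) (simp_all add: indicator_def)
  then have "v \<longlonglongrightarrow> 0"
    unfolding v_def avg_add[symmetric] avg_diff[symmetric] by (simp add: algebra_simps)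
  then have "(\<lambda>T. \<bar>c\<bar> * \<bar>v T\<bar> / \<epsilon>) \<longlonglongrightarrow> \<bar>c\<bar> * \<bar>0\<bar> / \<epsilon>"
    using \<open>0 < \<epsilon>\<close> by (intro tendsto_intros) auto
  then show "(\<lambda>T. \<bar>c\<bar> * \<bar>v T\<bar> / \<epsilon>) \<longlonglongrightarrow> 0" by simp
  show "\<forall>\<^sub>F T in sequentially. norm (avg w T) \<le> \<bar>c\<bar> * \<bar>v T\<bar> / \<epsilon>"
  proof (intro always_eventually allI)
    fix T
    have "\<epsilon> * avg w T = avg (\<lambda>t. \<epsilon> * w t) T" by (simp add: avg_mult_left)
    also have "\<dots> \<le> avg (\<lambda>t. c * (w t * (Z t k - 1 / real (n+1)))) T"
      using sep by (intro avg_mono) (simp add: w_def indicator_def)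
    also have "\<dots> = c * v T" by (simp add: v_def avg_mult_left)
    also have "\<dots> \<le> \<bar>c\<bar> * \<bar>v T\<bar>" by (simp add: abs_mult[symmetric])
    finally have "avg w T \<le> \<bar>c\<bar> * \<bar>v T\<bar> / \<epsilon>"
      using \<open>0 < \<epsilon>\<close> by (simp add: field_simps)
    moreover have "0 \<le> avg w T"
      by (simp add: avg_real w_def sum_nonneg)
    ultimately show "norm (avg w T) \<le> \<bar>c\<bar> * \<bar>v T\<bar> / \<epsilon>" by simp
  qed
qed

lemma avg_not_near_unif_tendsto_zeroI:
  assumes "\<And>k. k \<in> {1..n+1} \<Longrightarrow> (\<lambda>T. avg (\<lambda>t. indicator (above_unif n \<epsilon> k) (Z t) :: real) T) \<longlonglongrightarrow> 0"
    and "\<And>k. k \<in> {1..n+1} \<Longrightarrow> (\<lambda>T. avg (\<lambda>t. indicator (below_unif n \<epsilon> k) (Z t) :: real) T) \<longlonglongrightarrow> 0"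
  shows "(\<lambda>T. avg (\<lambda>t. if near_unif n \<epsilon> (Z t) then 0 else 1 :: real) T) \<longlonglongrightarrow> 0"
proof (rule avg_tendsto_zero_comparison)
  define f where "f k = (\<lambda>t. indicator (above_unif n \<epsilon> k) (Z t) + indicator (below_unif n \<epsilon> k) (Z t) :: real)"
    for k
  show "norm (if near_unif n \<epsilon> (Z t) then 0 else 1 :: real) \<le> (\<Sum>k=1..n+1. f k t)" for t
  proof (cases "near_unif n \<epsilon> (Z t)")
    case False
    then obtain k where "k \<in> {1..n+1}" "Z t \<in> above_unif n \<epsilon> k \<union> below_unif n \<epsilon> k"
      by (rule not_near_unifE)
    then have "1 \<le> f k t" by (auto simp: f_def)
    also have "\<dots> \<le> (\<Sum>k=1..n+1. f k t)"
      using \<open>k \<in> {1..n+1}\<close> by (intro member_le_sum) (auto simp: f_def)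
    finally show ?thesis using False by simp
  next
    case True
    have "0 \<le> (\<Sum>k=1..n+1. f k t)" by (intro sum_nonneg) (simp add: f_def)
    then show ?thesis using True by simp
  qed
  have "(\<lambda>T. \<Sum>k=1..n+1. avg (f k) T) \<longlonglongrightarrow> 0"
    unfolding f_def avg_add using assms by (intro tendsto_null_sum tendsto_add_zero) auto
  then show "(\<lambda>T. avg (\<lambda>t. \<Sum>k=1..n+1. f k t) T) \<longlonglongrightarrow> 0"
    unfolding avg_sum .
qed

lemma avg_indicator_le_tendsto_cdf:
  assumes B: "\<And>t. 1 \<le> t \<Longrightarrow> B t \<in> Bset n"
    and dist: "(\<lambda>T. avg (\<lambda>t. eucl_d n (Q t) (qunif n)) T) \<longlonglongrightarrow> 0"
    and lln: "\<And>k. k \<in> {1..n+1} \<Longrightarrow> (\<lambda>T. avg (\<lambda>t. dirac_vec n (B t) k - Q t k) T) \<longlonglongrightarrow> 0"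
  shows "(\<lambda>T. avg (\<lambda>t. if B t \<le> a then 1 else 0) T) \<longlonglongrightarrow> cdf n (qunif n) a"
proof -
  define u where "u = 1 / real (n+1)"
  define c where "c k = (if bval n k \<le> a then 1 else 0 :: real)" for k
  have freq: "(\<lambda>T. avg (\<lambda>t. dirac_vec n (B t) k) T) \<longlonglongrightarrow> u" if k: "k \<in> {1..n+1}" for k
  proof -
    have "(\<lambda>T. avg (\<lambda>t. dirac_vec n (B t) k - Q t k) T + avg (\<lambda>t. 1 * (Q t k - u)) T
        + avg (\<lambda>t. u) T) \<longlonglongrightarrow> 0 + 0 + u"
      unfolding u_def
      by (intro tendsto_add lln[OF k] avg_weighted_dev_tendsto_zero[OF k _ dist] tendsto_avg_const) simp
    then show ?thesis by (simp add: avg_add[symmetric])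
  qed
  have "(\<lambda>T. \<Sum>k=1..n+1. c k * avg (\<lambda>t. dirac_vec n (B t) k) T) \<longlonglongrightarrow> (\<Sum>k=1..n+1. c k * u)"
    using freq by (intro tendsto_sum tendsto_mult tendsto_const) auto
  moreover have "avg (\<lambda>t. if B t \<le> a then 1 else 0) T = (\<Sum>k=1..n+1. c k * avg (\<lambda>t. dirac_vec n (B t) k) T)"
    for T
  proof -
    have "avg (\<lambda>t. if B t \<le> a then 1 else 0) T = avg (\<lambda>t. \<Sum>k=1..n+1. c k * dirac_vec n (B t) k) T"
      unfolding c_def using indicator_le_eq_sum_dirac_vec[OF B] by (intro avg_cong) (simp only: mult.commute)
    also have "\<dots> = (\<Sum>k=1..n+1. avg (\<lambda>t. c k * dirac_vec n (B t) k) T)" by (rule avg_sum)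
    finally show ?thesis by (simp only: avg_mult_left)
  qed
  moreover have "(\<Sum>k=1..n+1. c k * u) = cdf n (qunif n) a"
    unfolding cdf_def c_def u_def by (intro sum.cong) (auto simp: qunif_def)
  ultimately show ?thesis by simp
qed

lemma avg_not_near_unif_tendsto_zero:
  assumes \<epsilon>: "0 < \<epsilon>"
    and dist: "(\<lambda>T. avg (\<lambda>t. eucl_d n (Q t) (qunif n)) T) \<longlonglongrightarrow> 0"
    and lln: "\<And>k H. k \<in> {1..n+1} \<Longrightarrow> H \<in> {above_unif n \<epsilon> k, below_unif n \<epsilon> k} \<Longrightarrow>
        (\<lambda>T. avg (\<lambda>t. indicator H (Z t) * (dirac_vec n (B t) k - Q t k)) T) \<longlonglongrightarrow> 0"
    and cal: "\<And>k H. k \<in> {1..n+1} \<Longrightarrow> H \<in> {above_unif n \<epsilon> k, below_unif n \<epsilon> k} \<Longrightarrow>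
        (\<lambda>T. avg (\<lambda>t. indicator H (Z t) * (dirac_vec n (B t) k - Z t k)) T) \<longlonglongrightarrow> 0"
  shows "(\<lambda>T. avg (\<lambda>t. if near_unif n \<epsilon> (Z t) then 0 else 1 :: real) T) \<longlonglongrightarrow> 0"
proof (rule avg_not_near_unif_tendsto_zeroI)
  fix k assume k: "k \<in> {1..n+1}"
  show "(\<lambda>T. avg (\<lambda>t. indicator (above_unif n \<epsilon> k) (Z t) :: real) T) \<longlonglongrightarrow> 0"
  proof (rule avg_indicator_tendsto_zero_if_separated[OF \<epsilon> k _ dist lln[OF k] cal[OF k]])
    show "\<epsilon> \<le> 1 * (p k - 1 / real (n+1))" if "p \<in> above_unif n \<epsilon> k" for p
      using that by (simp add: above_unif_def)
  qed simp_all
  show "(\<lambda>T. avg (\<lambda>t. indicator (below_unif n \<epsilon> k) (Z t) :: real) T) \<longlonglongrightarrow> 0"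
  proof (rule avg_indicator_tendsto_zero_if_separated[OF \<epsilon> k _ dist lln[OF k] cal[OF k]])
    show "\<epsilon> \<le> - 1 * (p k - 1 / real (n+1))" if "p \<in> below_unif n \<epsilon> k" for p
      using that by (simp add: below_unif_def)
  qed simp_all
qed

lemma avg_payoff_tendsto:
  assumes "\<And>t. 1 \<le> t \<Longrightarrow> B t \<in> Bset n"
    and "(\<lambda>T. avg (\<lambda>t. eucl_d n (Q t) (qunif n)) T) \<longlonglongrightarrow> 0"
    and "\<And>k. k \<in> {1..n+1} \<Longrightarrow> (\<lambda>T. avg (\<lambda>t. dirac_vec n (B t) k - Q t k) T) \<longlonglongrightarrow> 0"
  shows "(\<lambda>T. avg (\<lambda>t. payoff n s a (B t)) T) \<longlonglongrightarrow> (cdf n (qunif n) a, LebC n s a)"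
  unfolding payoff_def avg_Pair
  using assms by (intro tendsto_Pair avg_indicator_le_tendsto_cdf tendsto_avg_const)

lemma norm_payoff_diff_le:
  assumes "a \<in> Aset n" "a' \<in> Aset n"
  shows "norm (payoff n s a x - payoff n s a' x) \<le> 1 + 4 * (\<Sum>i\<le>n+1. \<bar>s i\<bar>)"
proof -
  define d where "d = (if x \<le> a then 1 else 0) - (if x \<le> a' then 1 else 0 :: real)"
  have "norm (payoff n s a x - payoff n s a' x) = norm (d, LebC n s a - LebC n s a')"
    by (simp add: payoff_def d_def)
  also have "\<dots> \<le> \<bar>d\<bar> + \<bar>LebC n s a - LebC n s a'\<bar>"
    using norm_Pair_le[of d "LebC n s a - LebC n s a'"] by (simp only: real_norm_def)
  also have "\<dots> \<le> 1 + (\<bar>LebC n s a\<bar> + \<bar>LebC n s a'\<bar>)"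
    unfolding d_def by (intro add_mono abs_triangle_ineq4) auto
  finally show ?thesis
    using abs_LebC_le[OF assms(1), of s] abs_LebC_le[OF assms(2), of s] by linarith
qed

lemma boaci_eq_rfun_if_near_unif:
  assumes j: "j \<le> n" "rfun n \<alpha> = real j / real (n+1)"
    and below: "real j / real (n+1) + real (n+1) * \<epsilon> < \<alpha>"
    and above: "\<alpha> + real (n+1) * \<epsilon> < real (j+1) / real (n+1)"
    and "0 \<le> \<epsilon>" and "near_unif n \<epsilon> (Z t)"
  shows "boaci n \<alpha> Z t = rfun n \<alpha>"
  using Quant_eq_if_near_unif[OF j(1) _ below above] near_unif_qunif[OF \<open>0 \<le> \<epsilon>\<close>] assms(6) j(2)
  by (simp add: boaci_def)

lemma avg_payoff_boaci_tendsto: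
  assumes j: "j \<le> n" "rfun n \<alpha> = real j / real (n+1)"
    and below: "real j / real (n+1) + real (n+1) * \<epsilon> < \<alpha>"
    and above: "\<alpha> + real (n+1) * \<epsilon> < real (j+1) / real (n+1)"
    and \<epsilon>: "0 < \<epsilon>"
    and B: "\<And>t. 1 \<le> t \<Longrightarrow> B t \<in> Bset n"
    and dist: "(\<lambda>T. avg (\<lambda>t. eucl_d n (Q t) (qunif n)) T) \<longlonglongrightarrow> 0"
    and lln: "\<And>k H. k \<in> {1..n+1} \<Longrightarrow> H \<in> {UNIV, above_unif n \<epsilon> k, below_unif n \<epsilon> k} \<Longrightarrow>
        (\<lambda>T. avg (\<lambda>t. indicator H (Z t) * (dirac_vec n (B t) k - Q t k)) T) \<longlonglongrightarrow> 0"
    and cal: "\<And>k H. k \<in> {1..n+1} \<Longrightarrow> H \<in> {above_unif n \<epsilon> k, below_unif n \<epsilon> k} \<Longrightarrow>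
        (\<lambda>T. avg (\<lambda>t. indicator H (Z t) * (dirac_vec n (B t) k - Z t k)) T) \<longlonglongrightarrow> 0"
  shows "(\<lambda>T. avg (\<lambda>t. payoff n s (boaci n \<alpha> Z t) (B t)) T) \<longlonglongrightarrow> (rfun n \<alpha>, LebC n s \<alpha>)"
proof -
  define r where "r = rfun n \<alpha>"
  define rare where "rare t = (if near_unif n \<epsilon> (Z t) then 0 else 1 :: real)" for t
  have r_Aset: "r \<in> Aset n" using j by (auto simp: r_def Aset_def)
  have "0 \<le> real j / real (n+1) + real (n+1) * \<epsilon>" using \<epsilon> by simp
  then have "0 \<le> \<alpha>" using below by linarith
  have rare_lim: "(\<lambda>T. avg rare T) \<longlonglongrightarrow> 0"
    unfolding rare_def by (rule avg_not_near_unif_tendsto_zero[OF \<epsilon> dist]) (auto intro: lln cal)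
  define C where "C = 1 + 4 * (\<Sum>i\<le>n+1. \<bar>s i\<bar>)"
  have diff_le: "norm (payoff n s (boaci n \<alpha> Z t) (B t) - payoff n s r (B t)) \<le> C * rare t" for t
  proof (cases "boaci n \<alpha> Z t = r")
    case False
    then have "rare t = 1"
      using boaci_eq_rfun_if_near_unif[OF j below above] \<epsilon> by (auto simp: rare_def r_def)
    moreover have "boaci n \<alpha> Z t \<in> Aset n"
      using Quant_in_Aset[OF \<open>0 \<le> \<alpha>\<close>] by (simp add: boaci_def)
    ultimately show ?thesis
      using norm_payoff_diff_le[OF _ r_Aset] by (simp add: C_def)
  qed (simp add: C_def rare_def)
  have "(\<lambda>T. avg (\<lambda>t. payoff n s (boaci n \<alpha> Z t) (B t) - payoff n s r (B t)) T) \<longlonglongrightarrow> 0"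
  proof (rule avg_tendsto_zero_comparison)
    show "(\<lambda>T. avg (\<lambda>t. C * rare t) T) \<longlonglongrightarrow> 0"
      using tendsto_mult_right_zero[OF rare_lim, of C] by (simp add: avg_mult_left)
  qed (rule diff_le)
  moreover have "(\<lambda>T. avg (\<lambda>t. payoff n s r (B t)) T) \<longlonglongrightarrow> (r, LebC n s \<alpha>)"
  proof -
    have "cdf n (qunif n) r = r" using j cdf_qunif_grid[of j n] by (simp add: r_def)
    moreover have "(\<lambda>T. avg (\<lambda>t. dirac_vec n (B t) k - Q t k) T) \<longlonglongrightarrow> 0" if "k \<in> {1..n+1}" for k
      using lln[OF that, of UNIV] by simp
    ultimately show ?thesis
      using avg_payoff_tendsto[OF B dist, where s=s and a=r] by (simp add: r_def LebC_rfun)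
  qed
  ultimately have "(\<lambda>T. avg (\<lambda>t. payoff n s (boaci n \<alpha> Z t) (B t) - payoff n s r (B t)) T
      + avg (\<lambda>t. payoff n s r (B t)) T) \<longlonglongrightarrow> 0 + (r, LebC n s \<alpha>)"
    by (rule tendsto_add)
  then show ?thesis by (simp add: avg_add[symmetric] r_def)
qed

lemma unif_regions_borel:
  "above_unif n \<epsilon> k \<in> sets borel" "below_unif n \<epsilon> k \<in> sets borel"
proof -
  have "{p :: nat \<Rightarrow> real. p k \<in> A} \<in> sets borel" if "A \<in> sets borel" for A
    using measurable_sets[OF measurable_product_coordinates that] by (simp add: vimage_def)
  from this[of "{1 / real (n+1) + \<epsilon>..}"] this[of "{..1 / real (n+1) - \<epsilon>}"]
  show "above_unif n \<epsilon> k \<in> sets borel" "below_unif n \<epsilon> k \<in> sets borel"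
    by (simp_all add: above_unif_def below_unif_def)
qed

theorem corollary2:
  fixes n :: nat and L :: real and s :: "nat \<Rightarrow> real" and \<alpha> :: real
    and M :: "'w measure" and G :: "nat \<Rightarrow> 'w measure"
    and q z :: "nat \<Rightarrow> 'w \<Rightarrow> nat \<Rightarrow> real" and b :: "nat \<Rightarrow> 'w \<Rightarrow> real"
  assumes n: "n \<ge> 1" and L: "L > 0"
    and s0: "s 0 = 0" and sL: "s (n + 1) = L"
    and s_range: "\<forall>k\<in>{1..n}. 0 \<le> s k \<and> s k < L"
    and s_mono: "strict_mono_on {1..n} s"
    and alpha: "0 < \<alpha>" "\<alpha> < 1" "\<alpha> \<notin> Aset n"
    and P: "prob_space M"
    \<comment> \<open>G t: information available at round t just before b_t is drawn
        (past rounds, the opponent's choice q_t and the learner's round-t randomness)\<close>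
    and G_sub: "\<forall>t. subalgebra M (G t)"
    and G_mono: "\<forall>t. sets (G t) \<subseteq> sets (G (Suc t))"
    and q_meas: "\<forall>t\<ge>1. q t \<in> G t \<rightarrow>\<^sub>M borel"
    and z_meas: "\<forall>t\<ge>1. z t \<in> G t \<rightarrow>\<^sub>M borel"
    and b_meas: "\<forall>t\<ge>1. b t \<in> G (Suc t) \<rightarrow>\<^sub>M borel"
    and q_Delta: "\<forall>t\<ge>1. \<forall>\<omega>\<in>space M. q t \<omega> \<in> Delta n"
    and z_Delta: "\<forall>t\<ge>1. \<forall>\<omega>\<in>space M. z t \<omega> \<in> Delta n"
    and b_B: "\<forall>t\<ge>1. \<forall>\<omega>\<in>space M. b t \<omega> \<in> Bset n"
    \<comment> \<open>conditionally on G t, b_t is distributed according to q_t\<close>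
    and b_law: "\<forall>t\<ge>1. \<forall>k\<in>{1..n + 1}. \<forall>E\<in>sets (G t).
        measure M ({\<omega>\<in>space M. b t \<omega> = bval n k} \<inter> E) = (LINT \<omega>:E|M. q t \<omega> k)"
    and calibrated: "\<forall>H\<in>sets (borel :: (nat \<Rightarrow> real) measure). \<forall>k\<in>{1..n + 1}.
        AE \<omega> in M. (\<lambda>T. (1 / real T) * (\<Sum>t=1..T. indicator H (z t \<omega>)
                          * (dirac_vec n (b t \<omega>) k - z t \<omega> k))) \<longlonglongrightarrow> 0"
  shows "(AE \<omega> in M.
           ((\<lambda>T. (1 / real T) * (\<Sum>t=1..T. eucl_d n (q t \<omega>) (qunif n))) \<longlonglongrightarrow> 0)
           \<longrightarrow> ((\<lambda>T. (1 / real T) *\<^sub>R (\<Sum>t=1..T. payoff n s (boaci n \<alpha> (\<lambda>t. z t \<omega>) t) (b t \<omega>)))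
                 \<longlonglongrightarrow> (rfun n \<alpha>, LebC n s \<alpha>)))
         \<and> (rfun n \<alpha>, LebC n s \<alpha>) = mstar n s \<alpha> (qunif n)"
proof -
  obtain j \<epsilon> where j: "j \<le> n" "rfun n \<alpha> = real j / real (n+1)" and \<epsilon>: "0 < \<epsilon>"
      "real j / real (n+1) + real (n+1) * \<epsilon> < \<alpha>" "\<alpha> + real (n+1) * \<epsilon> < real (j+1) / real (n+1)"
    using rfun_bracket_margin[OF alpha] .
  interpret calibration_game M G n q z b
    using P G_sub G_mono q_meas z_meas b_meas q_Delta b_law
    by (simp add: calibration_game_def calibration_game_axioms_def)
  have lln: "AE \<omega> in M. \<forall>k\<in>{1..n+1}. \<forall>H\<in>{UNIV, above_unif n \<epsilon> k, below_unif n \<epsilon> k}.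
      (\<lambda>T. avg (\<lambda>t. indicator H (z t \<omega>) * (dirac_vec n (b t \<omega>) k - q t \<omega> k)) T) \<longlonglongrightarrow> 0"
    by (intro AE_ball_countable' AE_avg_increment_tendsto_zero) (auto simp: unif_regions_borel)
  have cal: "AE \<omega> in M. \<forall>k\<in>{1..n+1}. \<forall>H\<in>{above_unif n \<epsilon> k, below_unif n \<epsilon> k}.
      (\<lambda>T. avg (\<lambda>t. indicator H (z t \<omega>) * (dirac_vec n (b t \<omega>) k - z t \<omega> k)) T) \<longlonglongrightarrow> 0"
    using calibrated by (intro AE_ball_countable') (auto simp: avg_real unif_regions_borel)
  have "AE \<omega> in M. (\<lambda>T. avg (\<lambda>t. eucl_d n (q t \<omega>) (qunif n)) T) \<longlonglongrightarrow> 0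
      \<longrightarrow> (\<lambda>T. avg (\<lambda>t. payoff n s (boaci n \<alpha> (\<lambda>t. z t \<omega>) t) (b t \<omega>)) T) \<longlonglongrightarrow> (rfun n \<alpha>, LebC n s \<alpha>)"
    using lln cal AE_space
  proof eventually_elim
    case (elim \<omega>)
    then show ?case
      using b_B by (intro impI avg_payoff_boaci_tendsto[OF j \<epsilon>(2,3,1)]) auto
  qed
  then show ?thesis
    using mstar_qunif[OF alpha] by (simp add: avg_def)
qed

end
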